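(* Let $G$ be a finite simple graph with at least one edge and $\beta\in\mathbb{R}$. Then $M(t)=(d(t)+d(t)^* )^2\to0$ as $|t|\to\infty$, but $M(t)\neq0$ for every finite $t\in\mathbb{R}$.
   Context: For $k\ge0$ let $\Omega_k$ be the space of complex-valued functions on the (oriented) $k$-simplices of $G$ (complete subgraphs with $k+1$ vertices), $\Omega=\bigoplus_k\Omega_k$. The exterior derivative $d_0:\Omega_k\to\Omega_{k+1}$ is $(d_0f)(x_0,\dots,x_{k+1})=\sum_{j}(-1)^jf(x_0,\dots,\hat x_j,\dots,x_{k+1})$, $D_0=d_0+d_0^*$. For a self-adjoint operator $D$ on $\Omega$ whose blocks $\Omega_k\to\Omega_j$ vanish unless $|j-k|\le1$, write $D=d+d^*+b$ with $d$ the blocks $\Omega_k\to\Omega_{k+1}$ and $b$ the block-diagonal part. The Dirac deformation with real parameter $\beta$ is the solution $D(t)$ of $D'=BD-DB$, $D(0)=D_0$, with $B(t)=d(t)-d(t)^*+i\beta b(t)$, $D(t)=d(t)+d(t)^*+b(t)$ (the solution exists for all real $t$ and keeps this form). *)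

theory Defs
  imports Complex_Main
begin

text \<open>Operators on Omega are matrices indexed by simplices
(finite nonempty cliques). Each simplex is oriented by the linear order of the vertices.\<close>

type_synonym 'a op = "'a set \<Rightarrow> 'a set \<Rightarrow> complex"

definition simplices :: "'a set \<Rightarrow> ('a \<Rightarrow> 'a \<Rightarrow> bool) \<Rightarrow> 'a set set" where
  "simplices V E = {s. s \<subseteq> V \<and> s \<noteq> {} \<and> (\<forall>x\<in>s. \<forall>y\<in>s. x \<noteq> y \<longrightarrow> E x y)}"

definition sdim :: "'a set \<Rightarrow> nat" where
  "sdim s = card s - 1"

text \<open>Matrix of the exterior derivative d0 (row s in Omega_(k+1), column r in Omega_k):
 if s = r plus vertex v, the entry is (-1)^j with j the position of v in the sorted s.\<close>
definition ext_d0 :: "'a::linorder op" where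
  "ext_d0 s r = (if r \<subseteq> s \<and> card s = card r + 1
                 then (-1) ^ card {w\<in>s. w < the_elem (s - r)} else 0)"

definition adj :: "'a op \<Rightarrow> 'a op" where
  "adj A x y = cnj (A y x)"

definition opmult :: "'a set set \<Rightarrow> 'a op \<Rightarrow> 'a op \<Rightarrow> 'a op" where
  "opmult S A B x y = (\<Sum>z\<in>S. A x z * B z y)"

definition opadd :: "'a op \<Rightarrow> 'a op \<Rightarrow> 'a op" where
  "opadd A B x y = A x y + B x y"

definition dirac0 :: "'a::linorder op" where
  "dirac0 = opadd ext_d0 (adj ext_d0)"

definition upper_block :: "'a op \<Rightarrow> 'a op" where
  "upper_block A x y = (if sdim x = sdim y + 1 then A x y else 0)"

definition diag_block :: "'a op \<Rightarrow> 'a op" where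
  "diag_block A x y = (if sdim x = sdim y then A x y else 0)"

definition deform_B :: "real \<Rightarrow> 'a op \<Rightarrow> 'a op" where
  "deform_B \<beta> A x y =
     upper_block A x y - adj (upper_block A) x y + \<i> * complex_of_real \<beta> * diag_block A x y"

definition is_dirac_deformation ::
  "'a::linorder set \<Rightarrow> ('a \<Rightarrow> 'a \<Rightarrow> bool) \<Rightarrow> real \<Rightarrow> (real \<Rightarrow> 'a op) \<Rightarrow> bool" where
  "is_dirac_deformation V E \<beta> D \<longleftrightarrow>
     (let S = simplices V E in
      (\<forall>x\<in>S. \<forall>y\<in>S. D 0 x y = dirac0 x y) \<and>
      (\<forall>t. \<forall>x\<in>S. \<forall>y\<in>S.
         ((\<lambda>s. D s x y) has_vector_derivative
            (opmult S (deform_B \<beta> (D t)) (D t) x y - opmult S (D t) (deform_B \<beta> (D t)) x y))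
         (at t)))"

definition dirac_M :: "'a set set \<Rightarrow> 'a op \<Rightarrow> 'a op" where
  "dirac_M S A = (let L = opadd (upper_block A) (adj (upper_block A)) in opmult S L L)"

end

theory Submission
  imports Defs "HOL-Analysis.Convex"
begin

text \<open>
  Write \<open>D = d + d\<^sup>* + b\<close> and \<open>B = d - d\<^sup>* + i\<beta> b\<close>. The quantities \<open>D - D\<^sup>*\<close>, the blocks of \<open>D\<close>
  between dimensions at distance at least two, and \<open>d\<close> itself all satisfy linear differential
  equations along the flow, so by Gronwall's inequality each vanishes identically once it
  vanishes at a single time. Hence \<open>D(t)\<close> stays self-adjoint and block tridiagonal, so
  \<open>tr (D [B, D]) = 0\<close> and the Hilbert--Schmidt norm of \<open>D(t)\<close> is conserved: all entries stay
  bounded. For the number operator \<open>N\<close> the bounded function \<open>tr (N D(t))\<close> has derivative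
  \<open>2 \<parallel>d(t)\<parallel>\<^sup>2\<close>, whose own derivative is bounded, so Barbalat's lemma gives \<open>\<parallel>d(t)\<parallel> \<rightarrow> 0\<close>
  as \<open>t \<rightarrow> \<plusminus>\<infinity>\<close>, and with it \<open>M(t) = (d + d\<^sup>*)\<^sup>2 \<rightarrow> 0\<close>. Conversely the diagonal entries of
  \<open>M(t)\<close> are sums of squares of the entries of \<open>d + d\<^sup>*\<close>, so \<open>M(t) = 0\<close> forces \<open>d(t) = 0\<close>, hence
  \<open>d(0) = d\<^sub>0 = 0\<close>, which is false as soon as \<open>G\<close> has an edge.
\<close>

lemma has_real_derivative_cmod_power2:
  assumes "(z has_vector_derivative z') (at t)"
  shows "((\<lambda>s. (cmod (z s))\<^sup>2) has_real_derivative 2 * Re (cnj (z t) * z')) (at t)"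
proof -
  have re: "((\<lambda>s. Re (z s)) has_real_derivative Re z') (at t)"
    and im: "((\<lambda>s. Im (z s)) has_real_derivative Im z') (at t)"
    using assms has_vector_derivative_complex_iff by blast+
  have "((\<lambda>s. (Re (z s))\<^sup>2 + (Im (z s))\<^sup>2) has_real_derivative
          2 * Re (z t) * Re z' + 2 * Im (z t) * Im z') (at t)"
    by (auto intro!: derivative_eq_intros re im assms simp: algebra_simps)
  then show ?thesis
    by (simp add: cmod_power2 algebra_simps)
qed

lemma gronwall_zero:
  fixes N N' c :: "real \<Rightarrow> real"
  assumes der: "\<And>t. (N has_real_derivative N' t) (at t)"
    and nonneg: "\<And>t. 0 \<le> N t"
    and bound: "\<And>t. \<bar>N' t\<bar> \<le> c t * N t"
    and cont: "continuous_on UNIV c"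
    and zero: "N t0 = 0"
  shows "N t = 0"
proof -
  define I where "I = {min t t0..max t t0}"
  have "\<exists>m\<in>I. \<forall>s\<in>I. c s \<le> c m"
    unfolding I_def by (intro continuous_attains_sup continuous_on_subset[OF cont]) auto
  then obtain m where "\<forall>s\<in>I. c s \<le> c m" by blast
  define C where "C = max 0 (c m)"
  have C: "\<bar>N' s\<bar> \<le> C * N s" if "s \<in> I" for s
  proof -
    have "c s * N s \<le> C * N s"
      using \<open>\<forall>s\<in>I. c s \<le> c m\<close> that nonneg[of s] unfolding C_def
      by (intro mult_right_mono) fastforce+
    then show ?thesis using bound[of s] by linarith
  qed
  show ?thesis
  proof (cases "t0 \<le> t")
    case True
    have "N t * exp (- C * t) \<le> N t0 * exp (- C * t0)"
    proof (rule DERIV_nonpos_imp_nonincreasing[OF True])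
      fix s assume "t0 \<le> s" "s \<le> t"
      then have "(N' s - C * N s) * exp (- C * s) \<le> 0"
        using C[of s] by (intro mult_nonpos_nonneg) (auto simp: I_def)
      then show "\<exists>y. ((\<lambda>s. N s * exp (- C * s)) has_real_derivative y) (at s) \<and> y \<le> 0"
        by (auto intro!: derivative_eq_intros der simp: algebra_simps)
    qed
    then show ?thesis using zero nonneg[of t] by (simp add: mult_le_0_iff)
  next
    case False
    then have "t \<le> t0" by simp
    have "N t * exp (C * t) \<le> N t0 * exp (C * t0)"
    proof (rule DERIV_nonneg_imp_nondecreasing[OF \<open>t \<le> t0\<close>])
      fix s assume "t \<le> s" "s \<le> t0"
      then have "0 \<le> (N' s + C * N s) * exp (C * s)"
        using C[of s] by (intro mult_nonneg_nonneg) (auto simp: I_def)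
      then show "\<exists>y. ((\<lambda>s. N s * exp (C * s)) has_real_derivative y) (at s) \<and> 0 \<le> y"
        by (auto intro!: derivative_eq_intros der simp: algebra_simps)
    qed
    then show ?thesis using zero nonneg[of t] by (simp add: mult_le_0_iff)
  qed
qed

lemma row_plus_column_le_total:
  fixes G :: "'b \<Rightarrow> 'b \<Rightarrow> real"
  assumes "finite S" "x \<in> S" "y \<in> S" "\<And>u v. 0 \<le> G u v"
  shows "(\<Sum>z\<in>S. G z y + G x z) \<le> 2 * (\<Sum>u\<in>S. \<Sum>v\<in>S. G u v)"
proof -
  have "(\<Sum>z\<in>S. G z y) \<le> (\<Sum>u\<in>S. \<Sum>v\<in>S. G u v)"
    using assms by (intro sum_mono member_le_sum) auto
  moreover have "(\<Sum>z\<in>S. G x z) \<le> (\<Sum>u\<in>S. \<Sum>v\<in>S. G u v)"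
    using assms member_le_sum[of x S "\<lambda>u. \<Sum>v\<in>S. G u v"] by (simp add: sum_nonneg)
  ultimately show ?thesis by (simp add: sum.distrib)
qed

lemma double_sum_squared_le:
  fixes f :: "'b \<Rightarrow> 'b \<Rightarrow> real"
  shows "(\<Sum>u\<in>S. \<Sum>v\<in>S. f u v)\<^sup>2 \<le> real (card S * card S) * (\<Sum>u\<in>S. \<Sum>v\<in>S. (f u v)\<^sup>2)"
  using sum_squared_le_sum_of_squares[of "\<lambda>p. f (fst p) (snd p)" "S \<times> S"]
  by (simp add: sum.cartesian_product case_prod_beta card_cartesian_product mult.commute)

lemma member_le_double_sum:
  fixes f :: "'b \<Rightarrow> 'b \<Rightarrow> real"
  assumes "finite S" "x \<in> S" "y \<in> S" "\<And>u v. 0 \<le> f u v"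
  shows "f x y \<le> (\<Sum>u\<in>S. \<Sum>v\<in>S. f u v)"
  using assms
  by (intro order_trans[OF member_le_sum member_le_sum[where f = "\<lambda>u. \<Sum>v\<in>S. f u v"]])
     (auto intro: sum_nonneg)

lemma abs_Re_cnj_mult_le: "\<bar>Re (cnj a * b)\<bar> \<le> cmod a * cmod b"
  using abs_Re_le_cmod[of "cnj a * b"] by (simp add: norm_mult)

lemma abs_inner_le_of_row_column_bound:
  fixes G H :: "'b \<Rightarrow> 'b \<Rightarrow> complex"
  assumes fin: "finite S"
    and bound: "\<And>x y. x \<in> S \<Longrightarrow> y \<in> S \<Longrightarrow>
                  cmod (H x y) \<le> c * (\<Sum>z\<in>S. cmod (G z y) + cmod (G x z))"
  shows "\<bar>\<Sum>u\<in>S. \<Sum>v\<in>S. 2 * Re (cnj (G u v) * H u v)\<bar>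
    \<le> 4 * \<bar>c\<bar> * real (card S * card S) * (\<Sum>u\<in>S. \<Sum>v\<in>S. (cmod (G u v))\<^sup>2)"
proof -
  define A where "A = (\<Sum>u\<in>S. \<Sum>v\<in>S. cmod (G u v))"
  have H_le: "cmod (H u v) \<le> 2 * \<bar>c\<bar> * A" if "u \<in> S" "v \<in> S" for u v
  proof -
    have "cmod (H u v) \<le> \<bar>c\<bar> * (\<Sum>z\<in>S. cmod (G z v) + cmod (G u z))"
      by (intro order_trans[OF bound[OF that]] mult_right_mono) (auto intro: sum_nonneg)
    also have "\<dots> \<le> \<bar>c\<bar> * (2 * A)"
      unfolding A_def using fin that by (intro mult_left_mono row_plus_column_le_total) auto
    finally show ?thesis by simp
  qed
  have "\<bar>\<Sum>u\<in>S. \<Sum>v\<in>S. 2 * Re (cnj (G u v) * H u v)\<bar>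
      \<le> (\<Sum>u\<in>S. \<Sum>v\<in>S. \<bar>2 * Re (cnj (G u v) * H u v)\<bar>)"
    by (rule order_trans[OF sum_abs] sum_mono sum_abs)+
  also have "\<dots> \<le> (\<Sum>u\<in>S. \<Sum>v\<in>S. cmod (G u v) * (4 * \<bar>c\<bar> * A))"
  proof (intro sum_mono)
    fix u v assume "u \<in> S" "v \<in> S"
    have "\<bar>Re (cnj (G u v) * H u v)\<bar> \<le> cmod (G u v) * (2 * \<bar>c\<bar> * A)"
      by (intro order_trans[OF abs_Re_cnj_mult_le] mult_left_mono H_le \<open>u \<in> S\<close> \<open>v \<in> S\<close>) simp
    then show "\<bar>2 * Re (cnj (G u v) * H u v)\<bar> \<le> cmod (G u v) * (4 * \<bar>c\<bar> * A)"
      by simp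
  qed
  also have "\<dots> = A * (4 * \<bar>c\<bar> * A)"
    unfolding A_def by (simp add: sum_distrib_right)
  also have "\<dots> = 4 * \<bar>c\<bar> * A\<^sup>2"
    by (simp add: power2_eq_square mult_ac)
  also have "\<dots> \<le> 4 * \<bar>c\<bar> * (real (card S * card S) * (\<Sum>u\<in>S. \<Sum>v\<in>S. (cmod (G u v))\<^sup>2))"
    unfolding A_def by (intro mult_left_mono double_sum_squared_le) simp
  finally show ?thesis by (simp add: mult_ac)
qed

lemma matrix_gronwall_zero:
  fixes G G' :: "real \<Rightarrow> 'b \<Rightarrow> 'b \<Rightarrow> complex" and c :: "real \<Rightarrow> real"
  assumes fin: "finite S"
    and der: "\<And>t x y. x \<in> S \<Longrightarrow> y \<in> S \<Longrightarrow> ((\<lambda>s. G s x y) has_vector_derivative G' t x y) (at t)"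
    and bound: "\<And>t x y. x \<in> S \<Longrightarrow> y \<in> S \<Longrightarrow>
                  cmod (G' t x y) \<le> c t * (\<Sum>z\<in>S. cmod (G t z y) + cmod (G t x z))"
    and cont: "continuous_on UNIV c"
    and zero: "\<And>x y. x \<in> S \<Longrightarrow> y \<in> S \<Longrightarrow> G t0 x y = 0"
    and xy: "x \<in> S" "y \<in> S"
  shows "G t x y = 0"
proof -
  define N where "N s = (\<Sum>u\<in>S. \<Sum>v\<in>S. (cmod (G s u v))\<^sup>2)" for s
  define N' where "N' s = (\<Sum>u\<in>S. \<Sum>v\<in>S. 2 * Re (cnj (G s u v) * G' s u v))" for s
  have "N t = 0"
  proof (rule gronwall_zero[where N = N and N' = N' and c = "\<lambda>s. 4 * \<bar>c s\<bar> * real (card S * card S)"])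
    show "(N has_real_derivative N' s) (at s)" for s
      unfolding N_def N'_def by (intro DERIV_sum has_real_derivative_cmod_power2 der)
    show "\<bar>N' s\<bar> \<le> 4 * \<bar>c s\<bar> * real (card S * card S) * N s" for s
      unfolding N_def N'_def using fin bound by (rule abs_inner_le_of_row_column_bound)
    show "0 \<le> N s" for s unfolding N_def by (intro sum_nonneg) auto
    show "continuous_on UNIV (\<lambda>s. 4 * \<bar>c s\<bar> * real (card S * card S))"
      using cont by (intro continuous_intros)
    show "N t0 = 0" unfolding N_def using zero by simp
  qed
  then show ?thesis
    using fin xy unfolding N_def by (simp add: sum_nonneg_eq_0_iff sum_nonneg)
qed

lemma mono_bounded_eventually_flat:
  fixes L :: "real \<Rightarrow> real"
  assumes "mono L" "\<And>t. L t \<le> B" "0 < e"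
  shows "\<exists>t1. \<forall>t\<ge>t1. \<forall>s. L s - L t < e"
proof -
  have bdd: "bdd_above (range L)" using assms(2) by (auto intro!: bdd_aboveI[of _ B])
  have "\<exists>t1. Sup (range L) - e < L t1"
  proof (rule ccontr)
    assume "\<nexists>t1. Sup (range L) - e < L t1"
    then have "Sup (range L) \<le> Sup (range L) - e" by (intro cSUP_least) (auto simp: not_less)
    then show False using \<open>0 < e\<close> by simp
  qed
  then obtain t1 where t1: "Sup (range L) - e < L t1" by blast
  have "L s - L t < e" if "t1 \<le> t" for s t
  proof -
    have "L s \<le> Sup (range L)" using bdd by (auto intro: cSup_upper)
    then show ?thesis using t1 monoD[OF \<open>mono L\<close> that] by linarith
  qed
  then show ?thesis by blast
qed

lemma barbalat_at_top:
  fixes L f f' :: "real \<Rightarrow> real"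
  assumes dL: "\<And>t. (L has_real_derivative f t) (at t)"
    and df: "\<And>t. (f has_real_derivative f' t) (at t)"
    and f'_bound: "\<And>t. \<bar>f' t\<bar> \<le> C"
    and L_bound: "\<And>t. L t \<le> B"
    and nonneg: "\<And>t. 0 \<le> f t"
  shows "(f \<longlongrightarrow> 0) at_top"
proof (rule tendstoI)
  fix e :: real assume "0 < e"
  have "0 \<le> C" using f'_bound[of 0] by simp
  define h where "h = e / (2 * (C + 1))"
  have "0 < h" "h * C < e / 2"
    using \<open>0 < e\<close> \<open>0 \<le> C\<close> by (auto simp: h_def field_simps)
  have "mono L"
  proof (rule monoI)
    fix s t :: real assume "s \<le> t"
    show "L s \<le> L t"
      by (rule DERIV_nonneg_imp_nondecreasing[OF \<open>s \<le> t\<close>]) (use dL nonneg in blast)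
  qed
  then obtain t1 where flat: "\<And>t s. t1 \<le> t \<Longrightarrow> L s - L t < e * h / 2"
    using mono_bounded_eventually_flat[OF _ L_bound] \<open>0 < e\<close> \<open>0 < h\<close> by (meson half_gt_zero mult_pos_pos)
  have "f t < e" if "t1 \<le> t" for t
  proof -
    \<comment> \<open>\<open>L\<close> barely grows on \<open>[t, t + h]\<close>, so \<open>f\<close> is small somewhere there, and \<open>f'\<close> is bounded\<close>
    obtain \<xi> where \<xi>: "t < \<xi>" "\<xi> < t + h" "L (t + h) - L t = h * f \<xi>"
      using MVT2[of t "t + h" L f] \<open>0 < h\<close> dL by auto
    obtain \<eta> where "f \<xi> - f t = (\<xi> - t) * f' \<eta>"
      using MVT2[of t \<xi> f f'] \<xi> df by auto
    moreover have "\<bar>(\<xi> - t) * f' \<eta>\<bar> \<le> h * C"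
      using f'_bound[of \<eta>] \<xi> \<open>0 \<le> C\<close> by (auto simp: abs_mult intro!: mult_mono)
    moreover have "f \<xi> < e / 2"
      using flat[OF that, of "t + h"] \<xi>(3) \<open>0 < h\<close> by (simp add: mult.commute)
    ultimately show ?thesis using \<open>h * C < e / 2\<close> abs_ge_minus_self[of "(\<xi> - t) * f' \<eta>"] by linarith
  qed
  then show "\<forall>\<^sub>F t in at_top. dist (f t) 0 < e"
    unfolding eventually_at_top_linorder using nonneg by (auto intro!: exI[of _ t1])
qed

lemma barbalat_at_bot:
  fixes L f f' :: "real \<Rightarrow> real"
  assumes dL: "\<And>t. (L has_real_derivative f t) (at t)"
    and df: "\<And>t. (f has_real_derivative f' t) (at t)"
    and f'_bound: "\<And>t. \<bar>f' t\<bar> \<le> C"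
    and L_bound: "\<And>t. B \<le> L t"
    and nonneg: "\<And>t. 0 \<le> f t"
  shows "(f \<longlongrightarrow> 0) at_bot"
proof -
  have "((\<lambda>t. f (- t)) \<longlongrightarrow> 0) at_top"
  proof (rule barbalat_at_top[where L = "\<lambda>t. - L (- t)" and f' = "\<lambda>t. - f' (- t)" and B = "- B"])
    show "((\<lambda>t. - L (- t)) has_real_derivative f (- t)) (at t)" for t
      using DERIV_mirror[where f = L and x = t and y = "f (- t)"] dL[of "- t"] DERIV_minus by fastforce
    show "((\<lambda>t. f (- t)) has_real_derivative - f' (- t)) (at t)" for t
      using DERIV_mirror[where f = f and x = t and y = "f' (- t)"] df[of "- t"] by simp
  qed (use f'_bound L_bound nonneg in \<open>auto simp: minus_le_iff\<close>)
  then show ?thesis by (simp add: filterlim_at_bot_mirror)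
qed

lemma norm_sum_le_row_column:
  fixes T :: "'b \<Rightarrow> complex" and G :: "'b \<Rightarrow> 'b \<Rightarrow> complex"
  assumes "\<And>z. z \<in> S \<Longrightarrow> cmod (T z) \<le> c * (cmod (G z y) + cmod (G x z))"
  shows "cmod (\<Sum>z\<in>S. T z) \<le> c * (\<Sum>z\<in>S. cmod (G z y) + cmod (G x z))"
  using order_trans[OF norm_sum sum_mono[OF assms]] by (simp add: sum_distrib_left)

lemma norm_deform_B_le:
  "cmod (deform_B \<beta> A x y) \<le> (1 + \<bar>\<beta>\<bar>) * (cmod (A x y) + cmod (A y x))"
  by (auto simp: deform_B_def upper_block_def adj_def diag_block_def norm_mult algebra_simps)

abbreviation far_apart :: "'a set \<Rightarrow> 'a set \<Rightarrow> bool" where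
  "far_apart x y \<equiv> sdim y + 2 \<le> sdim x \<or> sdim x + 2 \<le> sdim y"

lemma commutator_entry_hermitian_defect:
  "deform_B \<beta> A x z * A z y - A x z * deform_B \<beta> A z y
    - cnj (deform_B \<beta> A y z * A z x - A y z * deform_B \<beta> A z x)
   = deform_B \<beta> A x z * (A z y - cnj (A y z)) - (A x z - cnj (A z x)) * deform_B \<beta> A z y
     - \<i> * \<beta> * cnj (A z x) * (if sdim z = sdim y then A z y - cnj (A y z) else 0)
     + \<i> * \<beta> * (if sdim x = sdim z then A x z - cnj (A z x) else 0) * cnj (A y z)"
  by (auto simp: deform_B_def upper_block_def adj_def diag_block_def algebra_simps)

lemma commutator_entry_far_apart:
  assumes "far_apart x y" "A z y = cnj (A y z)" "A x z = cnj (A z x)"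
  shows "deform_B \<beta> A x z * A z y - A x z * deform_B \<beta> A z y
    = deform_B \<beta> A x z * (if far_apart z y then A z y else 0)
      - (if far_apart x z then A x z else 0) * deform_B \<beta> A z y"
  using assms by (auto simp: deform_B_def upper_block_def adj_def diag_block_def algebra_simps)

lemma commutator_entry_upper:
  assumes "sdim x = sdim y + 1" "A x z = cnj (A z x)"
    "far_apart z y \<Longrightarrow> A z y = 0" "far_apart x z \<Longrightarrow> A x z = 0"
  shows "deform_B \<beta> A x z * A z y - A x z * deform_B \<beta> A z y
    = (if sdim z = sdim x then (\<i> * \<beta> - 1) * A x z * upper_block A z y else 0)
      + (if sdim z = sdim y then (1 - \<i> * \<beta>) * A z y * upper_block A x z else 0)"
  using assms by (auto simp: deform_B_def upper_block_def adj_def diag_block_def algebra_simps)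

lemma Re_commutator_entry_diagonal:
  assumes "A z x = cnj (A x z)"
  shows "Re (deform_B \<beta> A x z * A z x - A x z * deform_B \<beta> A z x)
     = 2 * (cmod (upper_block A x z))\<^sup>2 - 2 * (cmod (upper_block A z x))\<^sup>2"
  using assms
  by (auto simp: deform_B_def upper_block_def adj_def diag_block_def cmod_power2 algebra_simps)
     (simp_all add: power2_eq_square)

locale dirac_flow =
  fixes S :: "'a set set" and \<beta> :: real and D :: "real \<Rightarrow> 'a op"
  assumes finite_S: "finite S"
    and flow: "\<And>t x y. x \<in> S \<Longrightarrow> y \<in> S \<Longrightarrow> ((\<lambda>s. D s x y) has_vector_derivative
         (opmult S (deform_B \<beta> (D t)) (D t) x y - opmult S (D t) (deform_B \<beta> (D t)) x y)) (at t)"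
    and hermitian_0: "\<And>x y. x \<in> S \<Longrightarrow> y \<in> S \<Longrightarrow> D 0 x y = cnj (D 0 y x)"
    and far_apart_0: "\<And>x y. x \<in> S \<Longrightarrow> y \<in> S \<Longrightarrow> far_apart x y \<Longrightarrow> D 0 x y = 0"
begin

abbreviation B :: "real \<Rightarrow> 'a op" where
  "B t \<equiv> deform_B \<beta> (D t)"

definition commutator :: "real \<Rightarrow> 'a op" where
  "commutator t x y = (\<Sum>z\<in>S. B t x z * D t z y - D t x z * B t z y)"

definition mass :: "real \<Rightarrow> real" where
  "mass t = (\<Sum>u\<in>S. \<Sum>v\<in>S. cmod (D t u v))"

lemma has_vector_derivative_D:
  "x \<in> S \<Longrightarrow> y \<in> S \<Longrightarrow> ((\<lambda>s. D s x y) has_vector_derivative commutator t x y) (at t)"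
  using flow unfolding commutator_def opmult_def by (simp add: sum_subtractf)

lemma continuous_mass: "continuous_on UNIV mass"
  unfolding mass_def
  by (intro continuous_intros continuous_at_imp_continuous_on ballI
      has_vector_derivative_continuous[OF has_vector_derivative_D]) auto

lemma norm_D_le_mass: "x \<in> S \<Longrightarrow> y \<in> S \<Longrightarrow> cmod (D t x y) \<le> mass t"
  unfolding mass_def using finite_S by (intro member_le_double_sum) auto

lemma norm_B_le_mass:
  assumes "x \<in> S" "y \<in> S"
  shows "cmod (B t x y) \<le> 2 * (1 + \<bar>\<beta>\<bar>) * mass t"
proof -
  have "cmod (B t x y) \<le> (1 + \<bar>\<beta>\<bar>) * (mass t + mass t)"
    using assms by (intro order_trans[OF norm_deform_B_le] mult_left_mono add_mono norm_D_le_mass) auto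
  then show ?thesis by (simp add: algebra_simps)
qed

lemma mass_nonneg: "0 \<le> mass t"
  unfolding mass_def by (intro sum_nonneg) auto

lemma vanishes_if_linear_derivative:
  fixes G G' :: "real \<Rightarrow> 'a op" and T :: "real \<Rightarrow> 'a set \<Rightarrow> 'a set \<Rightarrow> 'a set \<Rightarrow> complex"
  assumes der: "\<And>t x y. x \<in> S \<Longrightarrow> y \<in> S \<Longrightarrow> ((\<lambda>s. G s x y) has_vector_derivative G' t x y) (at t)"
    and expand: "\<And>t x y. x \<in> S \<Longrightarrow> y \<in> S \<Longrightarrow> G' t x y = (\<Sum>z\<in>S. T t x y z)"
    and bound: "\<And>t x y z. x \<in> S \<Longrightarrow> y \<in> S \<Longrightarrow> z \<in> S \<Longrightarrow>
                  cmod (T t x y z) \<le> k * mass t * (cmod (G t z y) + cmod (G t x z))"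
    and zero: "\<And>x y. x \<in> S \<Longrightarrow> y \<in> S \<Longrightarrow> G t0 x y = 0"
    and "x \<in> S" "y \<in> S"
  shows "G t x y = 0"
proof (rule matrix_gronwall_zero[OF finite_S der _ _ zero \<open>x \<in> S\<close> \<open>y \<in> S\<close>])
  show "cmod (G' t x y) \<le> k * mass t * (\<Sum>z\<in>S. cmod (G t z y) + cmod (G t x z))"
    if "x \<in> S" "y \<in> S" for t x y
    unfolding expand[OF that] using that by (intro norm_sum_le_row_column bound)
  show "continuous_on UNIV (\<lambda>t. k * mass t)"
    using continuous_mass by (intro continuous_intros)
qed

lemma norm_commutator_term_le:
  fixes G :: "'a op"
  assumes "x \<in> S" "y \<in> S" "z \<in> S"
  shows "cmod (B t x z * G z y - G x z * B t z y)
    \<le> 2 * (1 + \<bar>\<beta>\<bar>) * mass t * (cmod (G z y) + cmod (G x z))"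
proof -
  have "cmod (B t x z * G z y - G x z * B t z y)
      \<le> cmod (B t x z) * cmod (G z y) + cmod (G x z) * cmod (B t z y)"
    using norm_triangle_ineq4[of "B t x z * G z y" "G x z * B t z y"] by (simp add: norm_mult)
  also have "\<dots> \<le> 2 * (1 + \<bar>\<beta>\<bar>) * mass t * cmod (G z y) + cmod (G x z) * (2 * (1 + \<bar>\<beta>\<bar>) * mass t)"
    using norm_B_le_mass assms by (intro add_mono mult_right_mono mult_left_mono) auto
  finally show ?thesis by (simp add: algebra_simps)
qed

lemma norm_hermitian_defect_term_le:
  fixes G g :: "'a op"
  assumes "x \<in> S" "y \<in> S" "z \<in> S" "cmod (g z y) \<le> cmod (G z y)" "cmod (g x z) \<le> cmod (G x z)"
  shows "cmod (B t x z * G z y - G x z * B t z y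
      - \<i> * \<beta> * cnj (D t z x) * g z y + \<i> * \<beta> * g x z * cnj (D t y z))
    \<le> (2 + 3 * \<bar>\<beta>\<bar>) * mass t * (cmod (G z y) + cmod (G x z))"
proof -
  have "cmod (D t z x) * cmod (g z y) \<le> mass t * cmod (G z y)"
    "cmod (D t y z) * cmod (g x z) \<le> mass t * cmod (G x z)"
    using assms norm_D_le_mass mass_nonneg by (auto intro!: mult_mono)
  then have "cmod (\<i> * \<beta> * cnj (D t z x) * g z y) \<le> \<bar>\<beta>\<bar> * mass t * cmod (G z y)"
    "cmod (\<i> * \<beta> * g x z * cnj (D t y z)) \<le> \<bar>\<beta>\<bar> * mass t * cmod (G x z)"
    by (auto simp: norm_mult mult_ac intro: mult_left_mono)
  moreover have "cmod (a - b - c + d) \<le> cmod (a - b) + cmod c + cmod d" for a b c d :: complex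
    using norm_triangle_ineq[of "a - b - c" d] norm_triangle_ineq4[of "a - b" c] by linarith
  ultimately have "cmod (B t x z * G z y - G x z * B t z y
      - \<i> * \<beta> * cnj (D t z x) * g z y + \<i> * \<beta> * g x z * cnj (D t y z))
    \<le> 2 * (1 + \<bar>\<beta>\<bar>) * mass t * (cmod (G z y) + cmod (G x z))
      + \<bar>\<beta>\<bar> * mass t * cmod (G z y) + \<bar>\<beta>\<bar> * mass t * cmod (G x z)"
    using norm_commutator_term_le[OF assms(1-3), of t G] by (smt (verit))
  also have "\<dots> = (2 + 3 * \<bar>\<beta>\<bar>) * mass t * (cmod (G z y) + cmod (G x z))"
    by (simp add: algebra_simps)
  finally show ?thesis .
qed

lemma hermitian:
  assumes "x \<in> S" "y \<in> S"
  shows "D t x y = cnj (D t y x)"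
proof -
  define G where "G t x y = D t x y - cnj (D t y x)" for t x y
  define g where "g t x z = (if sdim x = sdim z then G t x z else 0)" for t x z
  have "G t x y = 0"
  proof (rule vanishes_if_linear_derivative[where G = G and k = "2 + 3 * \<bar>\<beta>\<bar>"])
    show "((\<lambda>s. G s x y) has_vector_derivative commutator t x y - cnj (commutator t y x)) (at t)"
      if "x \<in> S" "y \<in> S" for t x y
      unfolding G_def using that by (auto intro!: derivative_eq_intros has_vector_derivative_D)
    show "commutator t x y - cnj (commutator t y x) =
        (\<Sum>z\<in>S. B t x z * G t z y - G t x z * B t z y
               - \<i> * \<beta> * cnj (D t z x) * g t z y + \<i> * \<beta> * g t x z * cnj (D t y z))" for t x y
      unfolding commutator_def cnj_sum sum_subtractf[symmetric] G_def g_def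
      by (intro sum.cong refl commutator_entry_hermitian_defect)
    show "G 0 x y = 0" if "x \<in> S" "y \<in> S" for x y
      unfolding G_def using hermitian_0[OF that] by simp
    show "cmod (B t x z * G t z y - G t x z * B t z y
               - \<i> * \<beta> * cnj (D t z x) * g t z y + \<i> * \<beta> * g t x z * cnj (D t y z))
        \<le> (2 + 3 * \<bar>\<beta>\<bar>) * mass t * (cmod (G t z y) + cmod (G t x z))"
      if "x \<in> S" "y \<in> S" "z \<in> S" for t x y z
      using that by (intro norm_hermitian_defect_term_le) (auto simp: g_def)
  qed (use assms in auto)
  then show ?thesis unfolding G_def by simp
qed

lemma far_apart_zero:
  assumes "x \<in> S" "y \<in> S" "far_apart x y"
  shows "D t x y = 0"
proof -
  define G where "G t x y = (if far_apart x y then D t x y else 0)" for t x y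
  have "G t x y = 0"
  proof (rule vanishes_if_linear_derivative[where G = G and k = "2 * (1 + \<bar>\<beta>\<bar>)"])
    show "((\<lambda>s. G s x y) has_vector_derivative (if far_apart x y then commutator t x y else 0)) (at t)"
      if "x \<in> S" "y \<in> S" for t x y
      using that by (cases "far_apart x y") (simp_all add: G_def has_vector_derivative_D)
    show "(if far_apart x y then commutator t x y else 0) =
        (\<Sum>z\<in>S. if far_apart x y then B t x z * G t z y - G t x z * B t z y else 0)"
      if "x \<in> S" "y \<in> S" for t x y
    proof (cases "far_apart x y")
      case True
      have "B t x z * D t z y - D t x z * B t z y = B t x z * G t z y - G t x z * B t z y"
        if "z \<in> S" for z
        unfolding G_def using \<open>x \<in> S\<close> \<open>y \<in> S\<close> that
        by (intro commutator_entry_far_apart[OF True] hermitian)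
      then show ?thesis using True unfolding commutator_def by (auto intro: sum.cong)
    qed simp
    show "G 0 x y = 0" if "x \<in> S" "y \<in> S" for x y
      unfolding G_def using far_apart_0[OF that] by simp
    show "cmod (if far_apart x y then B t x z * G t z y - G t x z * B t z y else 0)
        \<le> 2 * (1 + \<bar>\<beta>\<bar>) * mass t * (cmod (G t z y) + cmod (G t x z))"
      if "x \<in> S" "y \<in> S" "z \<in> S" for t x y z
      using norm_commutator_term_le[OF that] mass_nonneg[of t] by auto
  qed (use assms in auto)
  then show ?thesis using assms unfolding G_def by simp
qed

lemma has_vector_derivative_upper_block:
  "x \<in> S \<Longrightarrow> y \<in> S \<Longrightarrow>
    ((\<lambda>s. upper_block (D s) x y) has_vector_derivative upper_block (commutator t) x y) (at t)"
  by (simp add: upper_block_def has_vector_derivative_D)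

lemma norm_upper_block_term_le:
  fixes U :: "'a op"
  assumes "x \<in> S" "y \<in> S" "z \<in> S"
  shows "cmod (if sdim x = sdim y + 1 then
        (if sdim z = sdim x then (\<i> * \<beta> - 1) * D t x z * U z y else 0)
      + (if sdim z = sdim y then (1 - \<i> * \<beta>) * D t z y * U x z else 0)
    else 0) \<le> (1 + \<bar>\<beta>\<bar>) * mass t * (cmod (U z y) + cmod (U x z))"
  (is "cmod ?T \<le> _")
proof -
  have "cmod (\<i> * \<beta> - 1) \<le> 1 + \<bar>\<beta>\<bar>" "cmod (1 - \<i> * \<beta>) \<le> 1 + \<bar>\<beta>\<bar>"
    using norm_triangle_ineq4[of "\<i> * \<beta>" 1] norm_triangle_ineq4[of 1 "\<i> * \<beta>"]
    by (simp_all add: norm_mult)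
  then have "cmod (\<i> * \<beta> - 1) * cmod (D t x z) \<le> (1 + \<bar>\<beta>\<bar>) * mass t"
    "cmod (1 - \<i> * \<beta>) * cmod (D t z y) \<le> (1 + \<bar>\<beta>\<bar>) * mass t"
    using norm_D_le_mass assms by (auto intro!: mult_mono)
  then have "cmod (if sdim z = sdim x then (\<i> * \<beta> - 1) * D t x z * U z y else 0)
      \<le> (1 + \<bar>\<beta>\<bar>) * mass t * cmod (U z y)"
    "cmod (if sdim z = sdim y then (1 - \<i> * \<beta>) * D t z y * U x z else 0)
      \<le> (1 + \<bar>\<beta>\<bar>) * mass t * cmod (U x z)"
    using mass_nonneg[of t] by (auto simp: norm_mult mult.assoc[symmetric] intro!: mult_right_mono)
  moreover have "0 \<le> (1 + \<bar>\<beta>\<bar>) * mass t * cmod (U z y)" "0 \<le> (1 + \<bar>\<beta>\<bar>) * mass t * cmod (U x z)"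
    using mass_nonneg[of t] by simp_all
  moreover have "cmod ?T
      \<le> cmod (if sdim z = sdim x then (\<i> * \<beta> - 1) * D t x z * U z y else 0)
        + cmod (if sdim z = sdim y then (1 - \<i> * \<beta>) * D t z y * U x z else 0)"
    by (auto intro: norm_triangle_ineq)
  ultimately show ?thesis
    unfolding distrib_left by linarith
qed

lemma upper_block_vanishes:
  assumes zero: "\<And>x y. x \<in> S \<Longrightarrow> y \<in> S \<Longrightarrow> upper_block (D t0) x y = 0"
    and "x \<in> S" "y \<in> S"
  shows "upper_block (D t) x y = 0"
proof (rule vanishes_if_linear_derivative[where G = "\<lambda>t. upper_block (D t)" and k = "1 + \<bar>\<beta>\<bar>"])
  let ?T = "\<lambda>t x y z. if sdim x = sdim y + 1 then
      (if sdim z = sdim x then (\<i> * \<beta> - 1) * D t x z * upper_block (D t) z y else 0)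
      + (if sdim z = sdim y then (1 - \<i> * \<beta>) * D t z y * upper_block (D t) x z else 0)
    else 0"
  show "((\<lambda>s. upper_block (D s) x y) has_vector_derivative upper_block (commutator t) x y) (at t)"
    if "x \<in> S" "y \<in> S" for t x y
    using that by (rule has_vector_derivative_upper_block)
  show "upper_block (commutator t) x y = (\<Sum>z\<in>S. ?T t x y z)" if "x \<in> S" "y \<in> S" for t x y
  proof (cases "sdim x = sdim y + 1")
    case True
    have "B t x z * D t z y - D t x z * B t z y = ?T t x y z" if "z \<in> S" for z
      using commutator_entry_upper[where A = "D t" and \<beta> = \<beta>, OF True hermitian[OF \<open>x \<in> S\<close> that]
          far_apart_zero[OF that \<open>y \<in> S\<close>] far_apart_zero[OF \<open>x \<in> S\<close> that]] True
      by simp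
    then show ?thesis
      using True unfolding upper_block_def[of "commutator t"] commutator_def by (auto intro: sum.cong)
  qed (simp add: upper_block_def)
  show "cmod (?T t x y z)
      \<le> (1 + \<bar>\<beta>\<bar>) * mass t * (cmod (upper_block (D t) z y) + cmod (upper_block (D t) x z))"
    if "x \<in> S" "y \<in> S" "z \<in> S" for t x y z
    using that by (rule norm_upper_block_term_le)
qed (use assms in auto)

definition energy :: "real \<Rightarrow> real" where
  "energy t = (\<Sum>x\<in>S. \<Sum>y\<in>S. (cmod (D t x y))\<^sup>2)"

lemma trace_D_commutator: "(\<Sum>x\<in>S. \<Sum>y\<in>S. cnj (D t x y) * commutator t x y) = 0"
proof -
  define P where "P x y z = D t y x * B t x z * D t z y" for x y z
  have "(\<Sum>x\<in>S. \<Sum>y\<in>S. cnj (D t x y) * commutator t x y)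
      = (\<Sum>x\<in>S. \<Sum>y\<in>S. D t y x * commutator t x y)"
    by (intro sum.cong refl) (metis hermitian complex_cnj_cnj)
  also have "\<dots> = (\<Sum>x\<in>S. \<Sum>y\<in>S. \<Sum>z\<in>S. P x y z) - (\<Sum>x\<in>S. \<Sum>y\<in>S. \<Sum>z\<in>S. P z x y)"
    unfolding commutator_def sum_subtractf[symmetric] P_def
    by (intro sum.cong refl) (auto simp: sum_distrib_left algebra_simps sum_subtractf[symmetric]
        intro!: sum.cong)
  also have "(\<Sum>x\<in>S. \<Sum>y\<in>S. \<Sum>z\<in>S. P z x y) = (\<Sum>x\<in>S. \<Sum>z\<in>S. \<Sum>y\<in>S. P z x y)"
    by (intro sum.cong refl sum.swap)
  also have "\<dots> = (\<Sum>z\<in>S. \<Sum>x\<in>S. \<Sum>y\<in>S. P z x y)"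
    by (rule sum.swap)
  finally show ?thesis by simp
qed

lemma energy_const: "energy t = energy 0"
proof -
  have "(energy has_real_derivative 2 * Re (\<Sum>x\<in>S. \<Sum>y\<in>S. cnj (D s x y) * commutator s x y))
      (at s)" for s
    unfolding energy_def Re_sum sum_distrib_left
    by (intro DERIV_sum has_real_derivative_cmod_power2 has_vector_derivative_D)
  then show ?thesis
    using trace_D_commutator DERIV_isconst_all by fastforce
qed

lemma energy_nonneg: "0 \<le> energy t"
  unfolding energy_def by (intro sum_nonneg) auto

lemma norm_D_le_energy:
  assumes "x \<in> S" "y \<in> S"
  shows "cmod (D t x y) \<le> sqrt (energy 0)"
proof -
  have "(cmod (D t x y))\<^sup>2 \<le> energy t"
    unfolding energy_def using finite_S assms by (intro member_le_double_sum) auto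
  then show ?thesis
    using energy_const[of t] by (simp add: real_le_rsqrt)
qed

lemma commutator_bounded: "\<exists>C. \<forall>t. \<forall>x\<in>S. \<forall>y\<in>S. cmod (commutator t x y) \<le> C"
proof -
  define r where "r = sqrt (energy 0)"
  have "0 \<le> r"
    unfolding r_def using energy_nonneg by simp
  have D: "cmod (D t x y) \<le> r" if "x \<in> S" "y \<in> S" for t x y
    unfolding r_def using that by (rule norm_D_le_energy)
  have B: "cmod (B t x y) \<le> 2 * (1 + \<bar>\<beta>\<bar>) * r" if "x \<in> S" "y \<in> S" for t x y
  proof -
    have "cmod (B t x y) \<le> (1 + \<bar>\<beta>\<bar>) * (r + r)"
      using that by (intro order_trans[OF norm_deform_B_le] mult_left_mono add_mono D) auto
    then show ?thesis by (simp add: algebra_simps)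
  qed
  have "cmod (commutator t x y) \<le> real (card S) * (2 * (2 * (1 + \<bar>\<beta>\<bar>) * r * r))"
    if "x \<in> S" "y \<in> S" for t x y
    unfolding commutator_def
  proof (rule order_trans[OF norm_sum sum_bounded_above])
    fix z assume "z \<in> S"
    have "cmod (B t x z * D t z y - D t x z * B t z y)
        \<le> cmod (B t x z) * cmod (D t z y) + cmod (D t x z) * cmod (B t z y)"
      using norm_triangle_ineq4[of "B t x z * D t z y" "D t x z * B t z y"] by (simp add: norm_mult)
    also have "\<dots> \<le> 2 * (1 + \<bar>\<beta>\<bar>) * r * r + r * (2 * (1 + \<bar>\<beta>\<bar>) * r)"
      using that \<open>z \<in> S\<close> \<open>0 \<le> r\<close> by (intro add_mono mult_mono B D) auto
    finally show "cmod (B t x z * D t z y - D t x z * B t z y) \<le> 2 * (2 * (1 + \<bar>\<beta>\<bar>) * r * r)"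
      by (simp add: algebra_simps)
  qed
  then show ?thesis by blast
qed

definition lyapunov :: "real \<Rightarrow> real" where
  "lyapunov t = (\<Sum>x\<in>S. real (sdim x) * Re (D t x x))"

definition upper_energy :: "real \<Rightarrow> real" where
  "upper_energy t = (\<Sum>x\<in>S. \<Sum>z\<in>S. (cmod (upper_block (D t) x z))\<^sup>2)"

lemma upper_energy_nonneg: "0 \<le> upper_energy t"
  unfolding upper_energy_def by (intro sum_nonneg) auto

lemma has_real_derivative_lyapunov: "(lyapunov has_real_derivative 2 * upper_energy t) (at t)"
proof -
  define u where "u x z = (cmod (upper_block (D t) x z))\<^sup>2" for x z
  have entry: "Re (B t x z * D t z x - D t x z * B t z x) = 2 * u x z - 2 * u z x"
    if "x \<in> S" "z \<in> S" for x z
    unfolding u_def using hermitian[OF that(2,1)] by (rule Re_commutator_entry_diagonal)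
  have "(lyapunov has_real_derivative (\<Sum>x\<in>S. real (sdim x) * Re (commutator t x x))) (at t)"
    unfolding lyapunov_def
    by (intro DERIV_sum DERIV_cmult has_field_derivative_Re has_vector_derivative_D) auto
  also have "(\<Sum>x\<in>S. real (sdim x) * Re (commutator t x x))
      = (\<Sum>x\<in>S. \<Sum>z\<in>S. real (sdim x) * (2 * u x z) - real (sdim x) * (2 * u z x))"
    unfolding commutator_def Re_sum sum_distrib_left
    by (intro sum.cong refl) (simp only: entry right_diff_distrib)
  also have "\<dots> = 2 * (\<Sum>x\<in>S. \<Sum>z\<in>S. real (sdim x) * u x z)
      - 2 * (\<Sum>x\<in>S. \<Sum>z\<in>S. real (sdim x) * u z x)"
    by (simp add: sum_subtractf sum_distrib_left algebra_simps)
  also have "(\<Sum>x\<in>S. \<Sum>z\<in>S. real (sdim x) * u z x) = (\<Sum>x\<in>S. \<Sum>z\<in>S. real (sdim z) * u x z)"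
    by (rule sum.swap)
  also have "2 * (\<Sum>x\<in>S. \<Sum>z\<in>S. real (sdim x) * u x z) - 2 * \<dots>
      = 2 * (\<Sum>x\<in>S. \<Sum>z\<in>S. (real (sdim x) - real (sdim z)) * u x z)"
    by (simp add: sum_subtractf algebra_simps)
  also have "\<dots> = 2 * upper_energy t"
    unfolding upper_energy_def u_def by (intro arg_cong[where f = "(*) 2"] sum.cong refl)
      (auto simp: upper_block_def)
  finally show ?thesis .
qed

lemma lyapunov_bounded: "\<bar>lyapunov t\<bar> \<le> (\<Sum>x\<in>S. real (sdim x)) * sqrt (energy 0)"
proof -
  have "\<bar>lyapunov t\<bar> \<le> (\<Sum>x\<in>S. real (sdim x) * \<bar>Re (D t x x)\<bar>)"
    unfolding lyapunov_def by (rule order_trans[OF sum_abs]) (simp add: abs_mult)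
  also have "\<dots> \<le> (\<Sum>x\<in>S. real (sdim x) * sqrt (energy 0))"
    by (intro sum_mono mult_left_mono order_trans[OF abs_Re_le_cmod norm_D_le_energy]) auto
  finally show ?thesis by (simp add: sum_distrib_right)
qed

definition upper_energy_deriv :: "real \<Rightarrow> real" where
  "upper_energy_deriv t =
    (\<Sum>x\<in>S. \<Sum>z\<in>S. 2 * Re (cnj (upper_block (D t) x z) * upper_block (commutator t) x z))"

lemma has_real_derivative_upper_energy:
  "(upper_energy has_real_derivative upper_energy_deriv t) (at t)"
  unfolding upper_energy_def upper_energy_deriv_def
  by (intro DERIV_sum has_real_derivative_cmod_power2 has_vector_derivative_upper_block)

lemma upper_energy_deriv_bounded: "\<exists>C. \<forall>t. \<bar>upper_energy_deriv t\<bar> \<le> C"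
proof -
  obtain C where C: "\<And>t x y. x \<in> S \<Longrightarrow> y \<in> S \<Longrightarrow> cmod (commutator t x y) \<le> C"
    using commutator_bounded by blast
  define r where "r = sqrt (energy 0)"
  have entry: "\<bar>2 * Re (cnj (upper_block (D t) x z) * upper_block (commutator t) x z)\<bar> \<le> 2 * (r * C)"
    if "x \<in> S" "z \<in> S" for t x z
  proof -
    have "cmod (upper_block (D t) x z) \<le> r" "cmod (upper_block (commutator t) x z) \<le> C"
      using norm_D_le_energy[OF that] C[OF that] order_trans[OF norm_ge_zero C[OF that]]
        energy_nonneg[of 0]
      unfolding r_def by (auto simp: upper_block_def)
    then have "\<bar>Re (cnj (upper_block (D t) x z) * upper_block (commutator t) x z)\<bar> \<le> r * C"
      using order_trans[OF norm_ge_zero] by (intro order_trans[OF abs_Re_cnj_mult_le] mult_mono) auto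
    then show ?thesis by (simp only: abs_mult)
  qed
  have "\<bar>upper_energy_deriv t\<bar> \<le> real (card S) * (real (card S) * (2 * (r * C)))" for t
    unfolding upper_energy_deriv_def
    by (intro order_trans[OF sum_abs sum_bounded_above] order_trans[OF sum_abs sum_bounded_above] entry)
  then show ?thesis by blast
qed

lemma upper_energy_tendsto_zero: "(upper_energy \<longlongrightarrow> 0) at_top" "(upper_energy \<longlongrightarrow> 0) at_bot"
proof -
  obtain C where C: "\<And>t. \<bar>upper_energy_deriv t\<bar> \<le> C"
    using upper_energy_deriv_bounded by blast
  define R where "R = (\<Sum>x\<in>S. real (sdim x)) * sqrt (energy 0) / 2"
  have L: "((\<lambda>t. lyapunov t / 2) has_real_derivative upper_energy t) (at t)" for t
    using DERIV_cdivide[OF has_real_derivative_lyapunov[of t], where c = 2] by simp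
  have "lyapunov t / 2 \<le> R" "- R \<le> lyapunov t / 2" for t
    using lyapunov_bounded[of t] unfolding R_def by auto
  then show "(upper_energy \<longlongrightarrow> 0) at_top" "(upper_energy \<longlongrightarrow> 0) at_bot"
    using barbalat_at_top[OF L has_real_derivative_upper_energy C]
      barbalat_at_bot[OF L has_real_derivative_upper_energy C] upper_energy_nonneg by blast+
qed

lemma dirac_M_tendsto_zero:
  assumes "(upper_energy \<longlongrightarrow> 0) F" "x \<in> S" "y \<in> S"
  shows "((\<lambda>t. dirac_M S (D t) x y) \<longlongrightarrow> 0) F"
proof -
  have "((\<lambda>t. upper_block (D t) u v) \<longlongrightarrow> 0) F" if "u \<in> S" "v \<in> S" for u v
  proof (rule tendsto_0_le[where K = 1])
    show "((\<lambda>t. sqrt (upper_energy t)) \<longlongrightarrow> 0) F"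
      using tendsto_real_sqrt[OF assms(1)] by simp
    have "(cmod (upper_block (D t) u v))\<^sup>2 \<le> upper_energy t" for t
      unfolding upper_energy_def using finite_S that by (intro member_le_double_sum) auto
    then show "\<forall>\<^sub>F t in F. norm (upper_block (D t) u v) \<le> norm (sqrt (upper_energy t)) * 1"
      using upper_energy_nonneg by (intro always_eventually allI) (simp add: real_le_rsqrt)
  qed
  then have "((\<lambda>t. \<Sum>z\<in>S. (upper_block (D t) x z + cnj (upper_block (D t) z x)) *
        (upper_block (D t) z y + cnj (upper_block (D t) y z))) \<longlongrightarrow>
        (\<Sum>z\<in>S. (0 + cnj 0) * (0 + cnj 0))) F"
    using assms by (intro tendsto_intros) auto
  then show ?thesis by (simp add: dirac_M_def Let_def opmult_def opadd_def adj_def)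
qed

lemma dirac_M_nonzero:
  assumes "x0 \<in> S" "y0 \<in> S" "upper_block (D 0) x0 y0 \<noteq> 0"
  shows "\<exists>x\<in>S. \<exists>y\<in>S. dirac_M S (D t) x y \<noteq> 0"
proof (rule ccontr)
  assume "\<not> ?thesis"
  then have M0: "dirac_M S (D t) x y = 0" if "x \<in> S" "y \<in> S" for x y
    using that by blast
  define L where "L x z = upper_block (D t) x z + cnj (upper_block (D t) z x)" for x z
  have L0: "L x z = 0" if "x \<in> S" "z \<in> S" for x z
  proof -
    have "dirac_M S (D t) x x = (\<Sum>z\<in>S. L x z * cnj (L x z))"
      by (simp add: dirac_M_def Let_def opmult_def opadd_def adj_def L_def add.commute)
    also have "\<dots> = complex_of_real (\<Sum>z\<in>S. (cmod (L x z))\<^sup>2)"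
      by (simp only: of_real_sum complex_norm_square)
    finally have "complex_of_real (\<Sum>z\<in>S. (cmod (L x z))\<^sup>2) = 0"
      using M0[OF that(1) that(1)] by simp
    then have "(\<Sum>z\<in>S. (cmod (L x z))\<^sup>2) = 0"
      by (simp only: of_real_eq_0_iff)
    then show ?thesis using finite_S that by (simp add: sum_nonneg_eq_0_iff)
  qed
  have "upper_block (D t) a b = 0" if "a \<in> S" "b \<in> S" for a b
  proof (cases "sdim a = sdim b + 1")
    case True
    then have "upper_block (D t) b a = 0" by (simp add: upper_block_def)
    then show ?thesis using L0[OF that] unfolding L_def by simp
  qed (simp add: upper_block_def)
  then have "upper_block (D 0) x0 y0 = 0"
    by (rule upper_block_vanishes) (use assms in auto)
  with assms show False by simp
qed

end

lemma finite_simplices: "finite V \<Longrightarrow> finite (simplices V E)"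
  unfolding simplices_def by (rule finite_subset[of _ "Pow V"]) auto

lemma sdim_eq_if_ext_d0_nonzero:
  assumes "finite V" "x \<in> simplices V E" "y \<in> simplices V E" "ext_d0 x y \<noteq> 0"
  shows "sdim x = sdim y + 1"
proof -
  have "card x = card y + 1"
    using assms(4) unfolding ext_d0_def by (auto split: if_splits)
  moreover have "card y \<noteq> 0"
    using assms(1,3) unfolding simplices_def by (auto dest: finite_subset)
  ultimately show ?thesis unfolding sdim_def by simp
qed

lemma dirac_flow_of_deformation:
  assumes "finite V" "is_dirac_deformation V E \<beta> D"
  shows "dirac_flow (simplices V E) \<beta> D"
proof -
  let ?S = "simplices V E"
  have D0: "D 0 x y = ext_d0 x y + cnj (ext_d0 y x)" if "x \<in> ?S" "y \<in> ?S" for x y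
    using assms(2) that unfolding is_dirac_deformation_def Let_def dirac0_def opadd_def adj_def
    by auto
  show ?thesis
  proof
    show "finite ?S" using assms(1) by (rule finite_simplices)
    show "((\<lambda>s. D s x y) has_vector_derivative
        opmult ?S (deform_B \<beta> (D t)) (D t) x y - opmult ?S (D t) (deform_B \<beta> (D t)) x y) (at t)"
      if "x \<in> ?S" "y \<in> ?S" for t x y
      using assms(2) that unfolding is_dirac_deformation_def Let_def by blast
    show "D 0 x y = cnj (D 0 y x)" if "x \<in> ?S" "y \<in> ?S" for x y
      using D0[OF that] D0[OF that(2,1)] by simp
    show "D 0 x y = 0" if "x \<in> ?S" "y \<in> ?S" "far_apart x y" for x y
    proof -
      have "ext_d0 x y = 0"
        using sdim_eq_if_ext_d0_nonzero[OF assms(1) that(1,2)] that(3) by (cases "ext_d0 x y = 0") auto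
      moreover have "ext_d0 y x = 0"
        using sdim_eq_if_ext_d0_nonzero[OF assms(1) that(2,1)] that(3) by (cases "ext_d0 y x = 0") auto
      ultimately show ?thesis using D0[OF that(1,2)] by simp
    qed
  qed
qed

lemma upper_block_dirac0_edge:
  assumes "a \<noteq> b"
  shows "upper_block dirac0 {a, b} {a} \<noteq> 0"
  using assms by (simp add: upper_block_def dirac0_def opadd_def adj_def ext_d0_def sdim_def)

theorem mainTheorem12:
  fixes V :: "'a::linorder set" and E :: "'a \<Rightarrow> 'a \<Rightarrow> bool"
    and \<beta> :: real and D :: "real \<Rightarrow> 'a set \<Rightarrow> 'a set \<Rightarrow> complex"
  assumes "finite V"
    and "\<forall>x y. E x y \<longrightarrow> E y x"
    and "\<forall>x. \<not> E x x"
    and "\<exists>x\<in>V. \<exists>y\<in>V. E x y"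
    and "is_dirac_deformation V E \<beta> D"
  shows "(\<forall>x\<in>simplices V E. \<forall>y\<in>simplices V E.
            ((\<lambda>t. dirac_M (simplices V E) (D t) x y) \<longlongrightarrow> 0) at_top \<and>
            ((\<lambda>t. dirac_M (simplices V E) (D t) x y) \<longlongrightarrow> 0) at_bot)
       \<and> (\<forall>t. \<exists>x\<in>simplices V E. \<exists>y\<in>simplices V E. dirac_M (simplices V E) (D t) x y \<noteq> 0)"
proof -
  let ?S = "simplices V E"
  interpret dirac_flow ?S \<beta> D
    using assms(1,5) by (rule dirac_flow_of_deformation)
  obtain a b where ab: "a \<in> V" "b \<in> V" "E a b"
    using assms(4) by blast
  then have "a \<noteq> b" using assms(3) by auto
  have edge: "{a, b} \<in> ?S" "{a} \<in> ?S"
    using ab assms(2) unfolding simplices_def by auto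
  have "upper_block (D 0) {a, b} {a} = upper_block dirac0 {a, b} {a}"
    using assms(5) edge unfolding is_dirac_deformation_def Let_def upper_block_def by auto
  then have "upper_block (D 0) {a, b} {a} \<noteq> 0"
    using upper_block_dirac0_edge[OF \<open>a \<noteq> b\<close>] by simp
  then show ?thesis
    using edge dirac_M_nonzero dirac_M_tendsto_zero upper_energy_tendsto_zero by blast
qed

end
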